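(* Let $n\geq 1$ and let $L_1,\ldots,L_n$ be sets, each of size $4$. Then there exists a nonrepetitive sequence $s_1,\ldots,s_n$ with $s_i\in L_i$ for all $i=1,\ldots,n$.
   Context: A repetition of size $h\geq 1$ in a sequence is a block of consecutive terms of the form $x_1\ldots x_h x_1\ldots x_h$ (two adjacent identical blocks of length $h$). A sequence is nonrepetitive if it contains no repetition of any size $h\geq 1$. *)

theory Defs
  imports Main
begin

definition has_repetition :: "'a list \<Rightarrow> bool" where
  "has_repetition s \<longleftrightarrow>
     (\<exists>i h. h \<ge> 1 \<and> i + 2 * h \<le> length s \<and> (\<forall>j<h. s ! (i + j) = s ! (i + h + j)))"

definition nonrepetitive :: "'a list \<Rightarrow> bool" where
  "nonrepetitive s \<longleftrightarrow> \<not> has_repetition s"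

end

theory Submission
  imports Defs
begin

(* Proof by counting (in the style of Rosenfeld's counting argument for
   nonrepetitive list colouring).  Let C k be the number of admissible
   sequences of length k, i.e. nonrepetitive sequences s_0 .. s_(k-1) with
   s_i in L_i.  Every admissible sequence of length k has 4 one-letter
   extensions; an extension that is not admissible must end with a square of
   some size h (a repetition in a one-letter extension of a nonrepetitive word
   is a suffix), and such an extension is determined by its admissible prefix
   of length k+1-h.  Hence 4 C k <= C (k+1) + sum_(h>=1) C (k+1-h).  Assuming
   inductively that C doubles at every earlier step, the sum is at most 2 C k,
   so C (k+1) >= 2 C k.  Thus C n >= 2^n > 0, which gives the theorem. *)

definition admissible :: "(nat \<Rightarrow> 'a set) \<Rightarrow> nat \<Rightarrow> 'a list set" where
  "admissible L k = {s. length s = k \<and> nonrepetitive s \<and> (\<forall>i<k. s ! i \<in> L i)}"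

definition ends_with_square :: "'a list \<Rightarrow> nat \<Rightarrow> bool" where
  "ends_with_square w h \<longleftrightarrow> 1 \<le> h \<and> 2 * h \<le> length w \<and>
     (\<forall>j<h. w ! (length w - 2 * h + j) = w ! (length w - h + j))"

lemma nonrepetitive_take:
  assumes "nonrepetitive s"
  shows "nonrepetitive (take m s)"
proof -
  have "\<not> has_repetition (take m s)"
  proof
    assume "has_repetition (take m s)"
    then obtain i h where h: "1 \<le> h" "i + 2 * h \<le> length (take m s)"
      and rep: "\<forall>j<h. take m s ! (i + j) = take m s ! (i + h + j)"
      unfolding has_repetition_def by auto
    have "\<forall>j<h. s ! (i + j) = s ! (i + h + j)"
      using h rep by auto
    with h assms show False
      unfolding nonrepetitive_def has_repetition_def by auto
  qed
  then show ?thesis unfolding nonrepetitive_def .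
qed

lemma repetition_after_append:
  assumes "nonrepetitive s" and "has_repetition (s @ [a])"
  shows "\<exists>h. ends_with_square (s @ [a]) h"
proof -
  from assms(2) obtain i h where h: "1 \<le> h" "i + 2 * h \<le> length s + 1"
    and rep: "\<forall>j<h. (s @ [a]) ! (i + j) = (s @ [a]) ! (i + h + j)"
    unfolding has_repetition_def by auto
  have "i + 2 * h = length s + 1"
  proof (rule ccontr)
    assume "i + 2 * h \<noteq> length s + 1"
    with h have inside: "i + 2 * h \<le> length s" by simp
    with rep have "\<forall>j<h. s ! (i + j) = s ! (i + h + j)"
      by (auto simp: nth_append)
    with h(1) inside assms(1) show False
      unfolding nonrepetitive_def has_repetition_def by blast
  qed
  then have "length (s @ [a]) - 2 * h = i" "length (s @ [a]) - h = i + h"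
    by simp_all
  with h rep have "ends_with_square (s @ [a]) h"
    unfolding ends_with_square_def by simp
  then show ?thesis ..
qed

text \<open>A word of length n ending with a square of size h is determined by its first n - h
  letters, since the last h letters repeat the h letters before them.\<close>
lemma ends_with_square_inj_take:
  "inj_on (take (n - h)) {w. length w = n \<and> ends_with_square w h}"
proof (rule inj_onI)
  fix v w :: "'a list"
  assume v: "v \<in> {w. length w = n \<and> ends_with_square w h}"
    and w: "w \<in> {w. length w = n \<and> ends_with_square w h}"
    and same_prefix: "take (n - h) v = take (n - h) w"
  have prefix: "v ! p = w ! p" if "p < n - h" for p
    using that arg_cong[OF same_prefix, of "\<lambda>xs. xs ! p"] by simp
  show "v = w"
  proof (rule nth_equalityI)
    show "length v = length w" using v w by simp
  next
    fix p assume p: "p < length v"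
    show "v ! p = w ! p"
    proof (cases "p < n - h")
      case True
      then show ?thesis by (rule prefix)
    next
      case False
      define j where "j = p - (n - h)"
      have hn: "2 * h \<le> n" and "length v = n"
        using v unfolding ends_with_square_def by auto
      with False p have j: "j < h" "p = n - h + j"
        unfolding j_def by linarith+
      have "v ! p = v ! (n - 2 * h + j)"
        using v j unfolding ends_with_square_def by auto
      also have "\<dots> = w ! (n - 2 * h + j)"
        using prefix j hn by simp
      also have "\<dots> = w ! p"
        using w j unfolding ends_with_square_def by auto
      finally show ?thesis .
    qed
  qed
qed

lemma card_ends_with_square_le:
  assumes "finite G"
    and "\<And>w. w \<in> W \<Longrightarrow> length w = n \<and> ends_with_square w h \<and> take (n - h) w \<in> G"
  shows "card W \<le> card G"
proof (rule card_inj_on_le)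
  show "inj_on (take (n - h)) W"
    by (rule inj_on_subset[OF ends_with_square_inj_take[of n h]]) (use assms(2) in blast)
qed (use assms in auto)

lemma admissible_finite:
  assumes "\<And>i. i < k \<Longrightarrow> finite (L i)"
  shows "finite (admissible L k)"
proof (rule finite_subset)
  show "admissible L k \<subseteq> {xs. set xs \<subseteq> (\<Union>i<k. L i) \<and> length xs = k}"
    unfolding admissible_def by (force simp: in_set_conv_nth)
  show "finite {xs. set xs \<subseteq> (\<Union>i<k. L i) \<and> length xs = k}"
    by (rule finite_lists_length_eq) (use assms in auto)
qed

lemma admissible_take:
  assumes "s \<in> admissible L k" and "m \<le> k"
  shows "take m s \<in> admissible L m"
  using assms nonrepetitive_take unfolding admissible_def by auto

lemma doubling_sum_bound_aux:
  fixes C :: "nat \<Rightarrow> nat"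
  assumes doubling: "\<And>m. m < k \<Longrightarrow> 2 * C m \<le> C (Suc m)"
    and "1 \<le> H" "H \<le> k"
  shows "(\<Sum>h = 1..H. C (k + 1 - h)) + C (k + 1 - H) \<le> 2 * C k"
  using assms(2,3)
proof (induction H rule: dec_induct)
  case base
  then show ?case by simp
next
  case (step H)
  then have "H \<le> k" "k - H < k" by simp_all
  then have "2 * C (k - H) \<le> C (k + 1 - H)"
    using doubling[of "k - H"] by (simp add: Suc_diff_le)
  with step.IH \<open>H \<le> k\<close> show ?case by simp
qed

lemma doubling_sum_bound:
  fixes C :: "nat \<Rightarrow> nat"
  assumes "\<And>m. m < k \<Longrightarrow> 2 * C m \<le> C (Suc m)" and "H \<le> k"
  shows "(\<Sum>h = 1..H. C (k + 1 - h)) \<le> 2 * C k"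
  using doubling_sum_bound_aux[of k C H] assms by (cases "H = 0") auto

lemma extension_admissible_or_square:
  assumes "s \<in> admissible L k" and "a \<in> L k"
  shows "s @ [a] \<in> admissible L (Suc k) \<or>
         (\<exists>h \<in> {1..(k + 1) div 2}. ends_with_square (s @ [a]) h)"
proof -
  have ns: "nonrepetitive s" and len: "length s = k" and entries: "\<forall>i<k. s ! i \<in> L i"
    using assms(1) unfolding admissible_def by auto
  show ?thesis
  proof (cases "nonrepetitive (s @ [a])")
    case True
    have "(s @ [a]) ! i \<in> L i" if "i < Suc k" for i
    proof (cases "i < k")
      case True
      then show ?thesis using entries len by (simp add: nth_append)
    next
      case False
      with that have "i = k" by simp
      moreover have "(s @ [a]) ! k = a"
        by (metis len nth_append_length)
      ultimately show ?thesis using assms(2) by simp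
    qed
    with True len have "s @ [a] \<in> admissible L (Suc k)"
      unfolding admissible_def by simp
    then show ?thesis ..
  next
    case False
    then have "has_repetition (s @ [a])"
      unfolding nonrepetitive_def by simp
    with ns have "\<exists>h. ends_with_square (s @ [a]) h"
      by (rule repetition_after_append)
    then obtain h where square: "ends_with_square (s @ [a]) h" ..
    then have "1 \<le> h" "2 * h \<le> k + 1"
      using len unfolding ends_with_square_def by simp_all
    then have "h \<in> {1..(k + 1) div 2}" by simp
    with square show ?thesis by blast
  qed
qed

text \<open>The key counting inequality: the |L k| * C k one-letter extensions of admissible
  sequences of length k are either admissible or end with a square of size h, and the
  latter are counted by the admissible sequences of length k + 1 - h.\<close>
lemma extension_count_inequality:
  assumes fin: "\<And>i. i \<le> k \<Longrightarrow> finite (L i)"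
  shows "card (L k) * card (admissible L k) \<le>
    card (admissible L (Suc k)) + (\<Sum>h = 1..(k + 1) div 2. card (admissible L (k + 1 - h)))"
proof -
  define C where "C m = card (admissible L m)" for m
  define E where "E = (\<lambda>(s, a). s @ [a]) ` (admissible L k \<times> L k)"
  define H where "H = (k + 1) div 2"
  define B where "B h = {w \<in> E. ends_with_square w h}" for h
  have fin_adm: "finite (admissible L m)" if "m \<le> Suc k" for m
    using that fin by (intro admissible_finite) auto
  have fin_E: "finite E"
    unfolding E_def using fin_adm fin by auto
  have "inj_on (\<lambda>(s, a). s @ [a]) (admissible L k \<times> L k)"
    by (auto simp: inj_on_def)
  then have card_E: "card E = card (L k) * C k"
    unfolding E_def C_def by (simp add: card_image card_cartesian_product)
  have E_split: "E \<subseteq> admissible L (Suc k) \<union> (\<Union>h\<in>{1..H}. B h)"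
  proof
    fix w assume "w \<in> E"
    then obtain s a where "w = s @ [a]" "s \<in> admissible L k" "a \<in> L k"
      unfolding E_def by auto
    with \<open>w \<in> E\<close> show "w \<in> admissible L (Suc k) \<union> (\<Union>h\<in>{1..H}. B h)"
      using extension_admissible_or_square[of s L k a] unfolding B_def H_def by auto
  qed
  have card_B: "card (B h) \<le> C (k + 1 - h)" for h
    unfolding C_def
  proof (rule card_ends_with_square_le[where n = "k + 1"])
    show "finite (admissible L (k + 1 - h))" by (rule fin_adm) simp
    fix w assume "w \<in> B h"
    then obtain s a where w: "w = s @ [a]" "s \<in> admissible L k" "ends_with_square w h"
      unfolding B_def E_def by auto
    have "1 \<le> h" "length s = k" using w unfolding ends_with_square_def admissible_def by auto
    then show "length w = k + 1 \<and> ends_with_square w h \<and> take (k + 1 - h) w \<in> admissible L (k + 1 - h)"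
      using w admissible_take[OF w(2), of "k + 1 - h"] by simp
  qed
  have "card (L k) * C k \<le> card (admissible L (Suc k) \<union> (\<Union>h\<in>{1..H}. B h))"
    unfolding card_E[symmetric] using E_split fin_adm fin_E
    by (intro card_mono) (auto simp: B_def)
  also have "\<dots> \<le> C (Suc k) + card (\<Union>h\<in>{1..H}. B h)"
    unfolding C_def by (rule card_Un_le)
  also have "card (\<Union>h\<in>{1..H}. B h) \<le> (\<Sum>h = 1..H. card (B h))"
    by (rule card_UN_le) simp
  also have "\<dots> \<le> (\<Sum>h = 1..H. C (k + 1 - h))"
    using card_B by (rule sum_mono)
  finally show ?thesis unfolding C_def H_def by simp
qed

lemma admissible_doubling_step:
  assumes fin: "\<And>i. i \<le> k \<Longrightarrow> finite (L i)" and four: "card (L k) = 4"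
    and doubling: "\<And>m. m < k \<Longrightarrow> 2 * card (admissible L m) \<le> card (admissible L (Suc m))"
  shows "2 * card (admissible L k) \<le> card (admissible L (Suc k))"
proof -
  have "4 * card (admissible L k) \<le>
      card (admissible L (Suc k)) + (\<Sum>h = 1..(k + 1) div 2. card (admissible L (k + 1 - h)))"
    using extension_count_inequality[of k L] fin four by simp
  also have "(\<Sum>h = 1..(k + 1) div 2. card (admissible L (k + 1 - h))) \<le> 2 * card (admissible L k)"
    by (rule doubling_sum_bound) (use doubling in auto)
  finally show ?thesis by simp
qed

lemma admissible_card_lower_bound:
  assumes "\<And>i. i < n \<Longrightarrow> finite (L i) \<and> card (L i) = 4" and "k \<le> n"
  shows "2 ^ k \<le> card (admissible L k)"
proof -
  have doubling: "2 * card (admissible L m) \<le> card (admissible L (Suc m))" if "m < n" for m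
    using that
  proof (induction m rule: less_induct)
    case (less m)
    show ?case
      by (rule admissible_doubling_step) (use assms(1) less in auto)
  qed
  show ?thesis
    using assms(2)
  proof (induction k)
    case 0
    have "admissible L 0 = {[]}"
      unfolding admissible_def nonrepetitive_def has_repetition_def by auto
    then show ?case by simp
  next
    case (Suc k)
    then show ?case using doubling[of k] by simp
  qed
qed

theorem mainTheorem1:
  fixes L :: "nat \<Rightarrow> 'a set" and n :: nat
  assumes "n \<ge> 1"
    and "\<And>i. i < n \<Longrightarrow> finite (L i) \<and> card (L i) = 4"
  shows "\<exists>s :: 'a list. length s = n \<and> nonrepetitive s \<and> (\<forall>i<n. s ! i \<in> L i)"
proof -
  have "2 ^ n \<le> card (admissible L n)"
    using admissible_card_lower_bound[OF assms(2)] by simp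
  moreover have "(0::nat) < 2 ^ n" by simp
  ultimately have "admissible L n \<noteq> {}"
    by (metis card.empty not_less_zero order_less_le_trans)
  then show ?thesis unfolding admissible_def by auto
qed

end
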